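(* Let $X$ be a nonempty compact metric space, $Y$ a compact metric space and $\mathcal Y$ an $(X)$-regularizing family for $Y$. Then the quotient space $Y/\mathcal Y$ is homeomorphic to the Cantor space.
   Context: An $(X)$-regularizing family for $Y$ is a countably infinite family $\mathcal Y$ of subsets of $Y$ such that: (a1) the members are pairwise disjoint subspaces homeomorphic to $X$; (a2) $\mathcal Y$ is null (for every $\varepsilon>0$ only finitely many members have diameter $\ge\varepsilon$); (a3) each member has dense complement in $Y$; (a4) $\bigcup\mathcal Y$ is dense in $Y$; (a5) any two points not in a common member of $\mathcal Y$ are separated by an open, closed, $\mathcal Y$-saturated subset of $Y$ (each member is contained in it or disjoint from it). $Y/\mathcal Y$ is the quotient space of the decomposition of $Y$ whose elements are the members of $\mathcal Y$ and the singletons of points of $Y\setminus\bigcup\mathcal Y$. *)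

theory Defs
  imports "HOL-Analysis.Analysis"
begin

definition regularizing_family ::
  "'b::metric_space set \<Rightarrow> 'a::metric_space set \<Rightarrow> 'a set set \<Rightarrow> bool" where
  "regularizing_family X Y \<F> \<longleftrightarrow>
     \<F> \<subseteq> Pow Y \<and> countable \<F> \<and> infinite \<F> \<and>
     \<comment> \<open>(a1)\<close>
     pairwise disjnt \<F> \<and>
     (\<forall>A\<in>\<F>. subtopology euclidean A homeomorphic_space subtopology euclidean X) \<and>
     \<comment> \<open>(a2) null\<close>
     (\<forall>e>0. finite {A\<in>\<F>. diameter A \<ge> e}) \<and>
     \<comment> \<open>(a3) each member has dense complement in Y\<close>
     (\<forall>A\<in>\<F>. Y \<subseteq> closure (Y - A)) \<and>
     \<comment> \<open>(a4) the union is dense in Y\<close>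
     Y \<subseteq> closure (\<Union>\<F>) \<and>
     \<comment> \<open>(a5) separation by clopen saturated sets\<close>
     (\<forall>x\<in>Y. \<forall>y\<in>Y. x \<noteq> y \<and> \<not> (\<exists>A\<in>\<F>. x \<in> A \<and> y \<in> A) \<longrightarrow>
        (\<exists>U. openin (subtopology euclidean Y) U \<and> closedin (subtopology euclidean Y) U \<and>
             (\<forall>A\<in>\<F>. A \<subseteq> U \<or> A \<inter> U = {}) \<and> x \<in> U \<and> y \<notin> U))"

definition decomposition :: "'a set \<Rightarrow> 'a set set \<Rightarrow> 'a set set" where
  "decomposition Y \<F> = \<F> \<union> {{y} | y. y \<in> Y - \<Union>\<F>}"

definition quotient_topology :: "'a::topological_space set \<Rightarrow> 'a set set \<Rightarrow> 'a set topology" where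
  "quotient_topology Y D = topology (\<lambda>U. U \<subseteq> D \<and> openin (subtopology euclidean Y) (\<Union>U))"


definition cantor_space :: "(nat \<Rightarrow> bool) topology" where
  "cantor_space = product_topology (\<lambda>_. discrete_topology UNIV) UNIV"

end

theory Submission
  imports Defs
begin

text \<open>The saturated clopen subsets of Y form a countable Boolean algebra (Y is compact
  metric), atomless by (a3) and (a4), which separates distinct blocks of the decomposition
  by (a5). Cutting Y successively by an enumeration of this algebra, with an arbitrary proper
  cut whenever the enumerated set fails to cut, gives a binary tree of nonempty saturated
  clopen sets. Sending a point to its branch is a continuous map onto the Cantor space
  (surjective by compactness) whose fibres are exactly the blocks, so it descends to a
  homeomorphism of the compact quotient.\<close>

lemma compact_countable_ball_base:
  fixes Y :: "'a::metric_space set"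
  assumes "compact Y"
  obtains B where "countable B" "\<And>b. b \<in> B \<Longrightarrow> open b"
    "\<And>U x. openin (top_of_set Y) U \<Longrightarrow> x \<in> U \<Longrightarrow> \<exists>b\<in>B. x \<in> b \<and> Y \<inter> b \<subseteq> U"
proof -
  have "\<exists>K. finite K \<and> Y \<subseteq> (\<Union>c\<in>K. ball c (inverse (Suc n)))" for n :: nat
  proof -
    have "Y \<subseteq> (\<Union>c\<in>Y. ball c (inverse (Suc n)))" by auto
    then obtain K where "K \<subseteq> Y" "finite K" "Y \<subseteq> (\<Union>c\<in>K. ball c (inverse (Suc n)))"
      using compactE_image[OF assms, of Y "\<lambda>c. ball c (inverse (Suc n))"] by auto
    then show ?thesis by blast
  qed
  then obtain K where K: "\<And>n. finite (K n)" "\<And>n. Y \<subseteq> (\<Union>c\<in>K n. ball c (inverse (Suc n)))"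
    by metis
  define B where "B = (\<Union>n. (\<lambda>c. ball c (inverse (Suc n))) ` K n)"
  show thesis
  proof
    show "countable B" unfolding B_def using K(1) by (auto intro: countable_finite)
    show "open b" if "b \<in> B" for b using that unfolding B_def by auto
    fix U x assume "openin (top_of_set Y) U" "x \<in> U"
    then obtain e where e: "e > 0" "ball x e \<inter> Y \<subseteq> U"
      by (meson openin_contains_ball)
    obtain n where n: "inverse (Suc n) < e / 2"
      using reals_Archimedean e(1) by (metis half_gt_zero)
    obtain c where c: "c \<in> K n" "x \<in> ball c (inverse (Suc n))"
      using K(2)[of n] \<open>x \<in> U\<close> openin_imp_subset[OF \<open>openin (top_of_set Y) U\<close>] by blast
    have "ball c (inverse (Suc n)) \<subseteq> ball x e"
    proof
      fix z assume "z \<in> ball c (inverse (Suc n))"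
      moreover have "dist x z \<le> dist x c + dist c z" by (rule dist_triangle)
      ultimately show "z \<in> ball x e" using c(2) n by (simp add: dist_commute)
    qed
    moreover have "ball c (inverse (Suc n)) \<in> B" unfolding B_def using c(1) by blast
    ultimately show "\<exists>b\<in>B. x \<in> b \<and> Y \<inter> b \<subseteq> U" using c(2) e(2) by blast
  qed
qed

text \<open>A clopen subset of a compact set is compact, hence a finite union of basic sets.\<close>
lemma countable_clopenin_compact:
  fixes Y :: "'a::metric_space set"
  assumes "compact Y"
  shows "countable {U. openin (top_of_set Y) U \<and> closedin (top_of_set Y) U}"
proof -
  obtain B where B: "countable B" "\<And>b. b \<in> B \<Longrightarrow> open b"
    "\<And>U x. openin (top_of_set Y) U \<Longrightarrow> x \<in> U \<Longrightarrow> \<exists>b\<in>B. x \<in> b \<and> Y \<inter> b \<subseteq> U"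
    using compact_countable_ball_base[OF assms] by blast
  have "{U. openin (top_of_set Y) U \<and> closedin (top_of_set Y) U} \<subseteq> (\<lambda>G. Y \<inter> \<Union>G) ` {G. finite G \<and> G \<subseteq> B}"
  proof clarify
    fix U assume Uo: "openin (top_of_set Y) U" and Uc: "closedin (top_of_set Y) U"
    have cover: "U \<subseteq> \<Union>{b\<in>B. Y \<inter> b \<subseteq> U}" using B(3)[OF Uo] by blast
    have "open b" if "b \<in> {b\<in>B. Y \<inter> b \<subseteq> U}" for b using that B(2) by blast
    then obtain G where "G \<subseteq> {b\<in>B. Y \<inter> b \<subseteq> U}" "finite G" "U \<subseteq> \<Union>G"
      using compactE[OF closedin_compact[OF assms Uc] cover] by blast
    then show "U \<in> (\<lambda>G. Y \<inter> \<Union>G) ` {G. finite G \<and> G \<subseteq> B}"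
      using openin_imp_subset[OF Uo] by (intro image_eqI[of _ _ G]) auto
  qed
  moreover have "countable ((\<lambda>G. Y \<inter> \<Union>G) ` {G. finite G \<and> G \<subseteq> B})"
    using countable_Collect_finite_subset[OF B(1)] by simp
  ultimately show ?thesis by (rule countable_subset)
qed

lemma Union_Int_subset_disjoint:
  assumes "disjoint D" "S \<subseteq> D" "T \<subseteq> D"
  shows "\<Union>(S \<inter> T) = \<Union>S \<inter> \<Union>T"
  using assms by (auto dest: disjointD)

lemma openin_quotient_topology:
  assumes "disjoint D"
  shows "openin (quotient_topology Y D) U \<longleftrightarrow> U \<subseteq> D \<and> openin (top_of_set Y) (\<Union>U)"
proof -
  have "istopology (\<lambda>U. U \<subseteq> D \<and> openin (top_of_set Y) (\<Union>U))"
    unfolding istopology_def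
  proof (rule conjI; intro allI impI)
    fix S T assume "S \<subseteq> D \<and> openin (top_of_set Y) (\<Union>S)" "T \<subseteq> D \<and> openin (top_of_set Y) (\<Union>T)"
    then show "S \<inter> T \<subseteq> D \<and> openin (top_of_set Y) (\<Union>(S \<inter> T))"
      using Union_Int_subset_disjoint[OF assms] by (auto intro: openin_Int)
  next
    fix \<K> assume "\<forall>K\<in>\<K>. K \<subseteq> D \<and> openin (top_of_set Y) (\<Union>K)"
    moreover have "\<Union>(\<Union>\<K>) = (\<Union>K\<in>\<K>. \<Union>K)" by blast
    ultimately show "\<Union>\<K> \<subseteq> D \<and> openin (top_of_set Y) (\<Union>(\<Union>\<K>))"
      by (auto intro: openin_Union)
  qed
  then show ?thesis by (simp add: quotient_topology_def)
qed

lemma topspace_quotient_topology: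
  assumes "partition_on Y D"
  shows "topspace (quotient_topology Y D) = D"
proof
  have open_iff: "openin (quotient_topology Y D) U \<longleftrightarrow> U \<subseteq> D \<and> openin (top_of_set Y) (\<Union>U)" for U
    using assms by (simp add: openin_quotient_topology partition_on_def)
  show "topspace (quotient_topology Y D) \<subseteq> D"
    using open_iff[of "topspace (quotient_topology Y D)"] by simp
  have "openin (quotient_topology Y D) D"
    using open_iff[of D] assms by (simp add: partition_on_def)
  then show "D \<subseteq> topspace (quotient_topology Y D)" by (rule openin_subset)
qed

definition partition_block :: "'a set set \<Rightarrow> 'a \<Rightarrow> 'a set" where
  "partition_block D y = (THE d. d \<in> D \<and> y \<in> d)"

lemma partition_block_eq:
  assumes "partition_on Y D" "d \<in> D" "y \<in> d"
  shows "partition_block D y = d"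
  unfolding partition_block_def
proof (rule the_equality)
  show "d \<in> D \<and> y \<in> d" using assms(2,3) ..
  fix e assume "e \<in> D \<and> y \<in> e"
  then show "e = d"
    using disjointD[OF partition_onD2[OF assms(1)] _ assms(2)] assms(3) by blast
qed

lemma partition_block_in:
  assumes "partition_on Y D" "y \<in> Y"
  shows "partition_block D y \<in> D" "y \<in> partition_block D y"
proof -
  obtain d where "d \<in> D" "y \<in> d"
    using assms by (auto simp: partition_on_def)
  then show "partition_block D y \<in> D" "y \<in> partition_block D y"
    using partition_block_eq[OF assms(1)] by simp_all
qed

lemma quotient_map_partition_block:
  assumes "partition_on Y D"
  shows "quotient_map (top_of_set Y) (quotient_topology Y D) (partition_block D)"
  unfolding quotient_map_def topspace_quotient_topology[OF assms]
proof (intro conjI allI impI)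
  show "partition_block D ` topspace (top_of_set Y) = D"
  proof
    show "D \<subseteq> partition_block D ` topspace (top_of_set Y)"
    proof
      fix d assume "d \<in> D"
      moreover obtain y where "y \<in> d" using \<open>d \<in> D\<close> assms unfolding partition_on_def by (metis ex_in_conv)
      ultimately show "d \<in> partition_block D ` topspace (top_of_set Y)"
        using assms partition_block_eq[OF assms] by (auto simp: partition_on_def)
    qed
  qed (use partition_block_in[OF assms] in auto)
next
  fix U assume "U \<subseteq> D"
  then have "{y \<in> topspace (top_of_set Y). partition_block D y \<in> U} = \<Union>U"
    using partition_block_in[OF assms] partition_block_eq[OF assms] assms
    by (fastforce simp: partition_on_def)
  then show "openin (top_of_set Y) {y \<in> topspace (top_of_set Y). partition_block D y \<in> U}
      \<longleftrightarrow> openin (quotient_topology Y D) U"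
    using \<open>U \<subseteq> D\<close> assms by (simp add: openin_quotient_topology partition_on_def)
qed

lemma partition_block_eq_iff:
  assumes "partition_on Y D" "x \<in> Y" "y \<in> Y"
  shows "partition_block D x = partition_block D y \<longleftrightarrow> (\<exists>d\<in>D. x \<in> d \<and> y \<in> d)"
proof
  show "\<exists>d\<in>D. x \<in> d \<and> y \<in> d" if "partition_block D x = partition_block D y"
    using partition_block_in[OF assms(1)] assms(2,3) that by metis
  show "partition_block D x = partition_block D y" if "\<exists>d\<in>D. x \<in> d \<and> y \<in> d"
    using partition_block_eq[OF assms(1)] that by metis
qed

lemma compact_space_quotient_topology:
  assumes "compact Y" "partition_on Y D"
  shows "compact_space (quotient_topology Y D)"
proof -
  have "compactin (top_of_set Y) Y"
    by (simp add: compactin_subtopology compactin_euclidean_iff assms(1))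
  then have "compactin (quotient_topology Y D) (partition_block D ` Y)"
    using quotient_imp_continuous_map[OF quotient_map_partition_block[OF assms(2)]]
    by (rule image_compactin)
  moreover have "partition_block D ` Y = D"
    using quotient_map_partition_block[OF assms(2)]
    by (simp add: quotient_map_def topspace_quotient_topology[OF assms(2)])
  ultimately show ?thesis by (simp add: compact_space_def topspace_quotient_topology[OF assms(2)])
qed

lemma quotient_topology_homeomorphic_space:
  assumes "compact Y" "partition_on Y D"
    and g: "continuous_map (top_of_set Y) T g" "Hausdorff_space T" "g ` Y = topspace T"
    and fibres: "\<And>x y. x \<in> Y \<Longrightarrow> y \<in> Y \<Longrightarrow> g x = g y \<longleftrightarrow> (\<exists>d\<in>D. x \<in> d \<and> y \<in> d)"
  shows "quotient_topology Y D homeomorphic_space T"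
proof -
  let ?Q = "quotient_topology Y D" and ?p = "partition_block D"
  have same_block: "g x = g y \<longleftrightarrow> ?p x = ?p y" if "x \<in> Y" "y \<in> Y" for x y
    using that by (simp add: fibres partition_block_eq_iff[OF assms(2)])
  define h where "h d = g (SOME y. y \<in> d)" for d
  have h_p: "h (?p y) = g y" if "y \<in> Y" for y
  proof -
    define z where "z = (SOME z. z \<in> ?p y)"
    have "z \<in> ?p y"
      unfolding z_def using partition_block_in(2)[OF assms(2) that] by (rule someI)
    moreover have "?p y \<subseteq> Y"
      using partition_block_in(1)[OF assms(2) that] assms(2) by (auto simp: partition_on_def)
    ultimately have "z \<in> Y" "?p z = ?p y"
      using partition_block_eq[OF assms(2) partition_block_in(1)[OF assms(2) that]] by auto
    then show ?thesis unfolding h_def z_def[symmetric] using same_block that by blast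
  qed
  have quot: "quotient_map (top_of_set Y) ?Q ?p"
    by (rule quotient_map_partition_block[OF assms(2)])
  have image: "?p ` Y = D"
    using quot by (simp add: quotient_map_def topspace_quotient_topology[OF assms(2)])
  have "continuous_map ?Q T h"
    using quot by (rule continuous_compose_quotient_map)
      (use g(1) h_p in \<open>auto intro: continuous_map_eq\<close>)
  moreover have "compact_space ?Q"
    using assms(1,2) by (rule compact_space_quotient_topology)
  moreover have "h ` topspace ?Q = topspace T"
  proof -
    have "h ` topspace ?Q = (\<lambda>y. h (?p y)) ` Y"
      unfolding topspace_quotient_topology[OF assms(2)] image_image[symmetric] image ..
    also have "\<dots> = g ` Y" by (rule image_cong) (simp_all add: h_p)
    finally show ?thesis using g(3) by simp
  qed
  moreover have "inj_on h (topspace ?Q)"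
  proof (rule inj_onI)
    fix d e assume "d \<in> topspace ?Q" "e \<in> topspace ?Q" "h d = h e"
    moreover from this(1,2) have "d \<in> ?p ` Y" "e \<in> ?p ` Y"
      by (simp_all add: image topspace_quotient_topology[OF assms(2)])
    then obtain x y where "x \<in> Y" "y \<in> Y" "d = ?p x" "e = ?p y" by blast
    ultimately show "d = e" using same_block h_p by simp
  qed
  ultimately have "homeomorphic_map ?Q T h"
    using g(2) by (simp add: continuous_imp_homeomorphic_map)
  then show ?thesis by (rule homeomorphic_map_imp_homeomorphic_space)
qed

locale countable_atomless_clopen_algebra =
  fixes Y :: "'a::topological_space set" and \<C> :: "'a set set"
  assumes compact: "compact Y" and nonempty: "Y \<noteq> {}"
    and countable: "countable \<C>" and top_member: "Y \<in> \<C>"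
    and Int_member: "U \<in> \<C> \<Longrightarrow> V \<in> \<C> \<Longrightarrow> U \<inter> V \<in> \<C>"
    and Diff_member: "U \<in> \<C> \<Longrightarrow> V \<in> \<C> \<Longrightarrow> U - V \<in> \<C>"
    and openin_member: "U \<in> \<C> \<Longrightarrow> openin (top_of_set Y) U"
    and atomless: "U \<in> \<C> \<Longrightarrow> U \<noteq> {} \<Longrightarrow> \<exists>V\<in>\<C>. U \<inter> V \<noteq> {} \<and> U - V \<noteq> {}"
begin

lemma closedin_member:
  assumes "U \<in> \<C>"
  shows "closedin (top_of_set Y) U"
proof -
  have "U \<subseteq> Y" using openin_imp_subset[OF openin_member[OF assms]] by simp
  moreover have "openin (top_of_set Y) (Y - U)" by (rule openin_member[OF Diff_member[OF top_member assms]])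
  ultimately show ?thesis by (simp add: closedin_def)
qed

text \<open>At stage n a set is cut by the n-th member of \<C> whenever that member cuts it
  properly; this is what makes the coding below separate the points that \<C> separates.\<close>
definition separator :: "nat \<Rightarrow> 'a set \<Rightarrow> 'a set" where
  "separator n U = (if U \<inter> from_nat_into \<C> n \<noteq> {} \<and> U - from_nat_into \<C> n \<noteq> {}
     then from_nat_into \<C> n else (SOME V. V \<in> \<C> \<and> U \<inter> V \<noteq> {} \<and> U - V \<noteq> {}))"

definition half :: "nat \<Rightarrow> 'a set \<Rightarrow> bool \<Rightarrow> 'a set" where
  "half n U b = {x \<in> U. x \<in> separator n U \<longleftrightarrow> b}"

primrec cell :: "(nat \<Rightarrow> bool) \<Rightarrow> nat \<Rightarrow> 'a set" where
  "cell w 0 = Y"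
| "cell w (Suc n) = half n (cell w n) (w n)"

primrec cell_of :: "'a \<Rightarrow> nat \<Rightarrow> 'a set" where
  "cell_of x 0 = Y"
| "cell_of x (Suc n) = half n (cell_of x n) (x \<in> separator n (cell_of x n))"

definition code :: "'a \<Rightarrow> nat \<Rightarrow> bool" where
  "code x n \<longleftrightarrow> x \<in> separator n (cell_of x n)"

lemma cell_of_Suc_code: "cell_of x (Suc n) = half n (cell_of x n) (code x n)"
  by (simp add: code_def)

lemma separator_member:
  assumes "U \<in> \<C>" "U \<noteq> {}"
  shows "separator n U \<in> \<C>" "U \<inter> separator n U \<noteq> {}" "U - separator n U \<noteq> {}"
proof -
  have "separator n U \<in> \<C> \<and> U \<inter> separator n U \<noteq> {} \<and> U - separator n U \<noteq> {}"
  proof (cases "U \<inter> from_nat_into \<C> n \<noteq> {} \<and> U - from_nat_into \<C> n \<noteq> {}")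
    case True
    moreover have "from_nat_into \<C> n \<in> \<C>" using top_member by (metis empty_iff from_nat_into)
    ultimately show ?thesis by (simp add: separator_def)
  next
    case False
    have "\<exists>V. V \<in> \<C> \<and> U \<inter> V \<noteq> {} \<and> U - V \<noteq> {}" using atomless[OF assms] by blast
    moreover have "separator n U = (SOME V. V \<in> \<C> \<and> U \<inter> V \<noteq> {} \<and> U - V \<noteq> {})"
      unfolding separator_def using False by (rule if_not_P)
    ultimately show ?thesis by (metis (mono_tags, lifting) someI_ex)
  qed
  then show "separator n U \<in> \<C>" "U \<inter> separator n U \<noteq> {}" "U - separator n U \<noteq> {}" by simp_all
qed

lemma half_member:
  assumes "U \<in> \<C>" "U \<noteq> {}"
  shows "half n U b \<in> \<C>" "half n U b \<noteq> {}"
proof -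
  have "half n U True = U \<inter> separator n U" "half n U False = U - separator n U"
    by (auto simp: half_def)
  then show "half n U b \<in> \<C>" "half n U b \<noteq> {}"
    using separator_member[OF assms, of n] assms(1) Int_member Diff_member by (cases b; simp)+
qed

lemma cell_member: "cell w n \<in> \<C>" "cell w n \<noteq> {}"
  by (induction n) (simp_all add: top_member nonempty half_member)

lemma decseq_cell: "decseq (cell w)"
  unfolding decseq_Suc_iff by (simp add: half_def)

lemma cell_of_eq_cell:
  assumes "x \<in> cell w n" "j \<le> n"
  shows "cell_of x j = cell w j"
  using assms(2)
proof (induction j)
  case (Suc j)
  have "cell w n \<subseteq> cell w (Suc j)" using decseq_cell[of w] Suc.prems unfolding decseq_def by blast
  then have "x \<in> cell w (Suc j)" using assms(1) by blast
  then have "x \<in> separator j (cell w j) \<longleftrightarrow> w j" by (simp add: half_def)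
  then show ?case using Suc by simp
qed simp

lemma cell_of_code: "cell_of x n = cell (code x) n"
  by (induction n) (simp_all add: code_def)

lemma mem_cell_code:
  assumes "x \<in> Y"
  shows "x \<in> cell (code x) n"
  unfolding cell_of_code[symmetric] using assms by (induction n) (simp_all add: half_def)

lemma code_eq_if_mem_cell:
  assumes "x \<in> cell w (Suc n)"
  shows "code x n = w n"
proof -
  have "cell_of x n = cell w n" using cell_of_eq_cell[OF assms] by simp
  then show ?thesis using assms by (simp add: code_def half_def)
qed

lemma code_level_set: "{x \<in> Y. code x k = b} = \<Union>{cell w (Suc k) | w. w k = b}"
proof
  show "{x \<in> Y. code x k = b} \<subseteq> \<Union>{cell w (Suc k) | w. w k = b}"
  proof clarify
    fix x assume "x \<in> Y"
    then have "x \<in> cell (code x) (Suc k)" by (rule mem_cell_code)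
    then show "x \<in> \<Union>{cell w (Suc k) | w. w k = code x k}" by blast
  qed
  show "\<Union>{cell w (Suc k) | w. w k = b} \<subseteq> {x \<in> Y. code x k = b}"
  proof
    fix x assume "x \<in> \<Union>{cell w (Suc k) | w. w k = b}"
    then obtain w where w: "w k = b" "x \<in> cell w (Suc k)" by blast
    moreover have "cell w (Suc k) \<subseteq> Y" using decseq_cell[of w] unfolding decseq_def
      by (metis cell.simps(1) zero_le)
    ultimately show "x \<in> {x \<in> Y. code x k = b}" using code_eq_if_mem_cell[OF w(2)] by blast
  qed
qed

lemma continuous_map_code: "continuous_map (top_of_set Y) cantor_space code"
  unfolding cantor_space_def continuous_map_componentwise_UNIV
proof
  fix k
  have "openin (top_of_set Y) {x \<in> Y. code x k = b}" for b
    unfolding code_level_set by (rule openin_Union) (blast intro: openin_member cell_member)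
  moreover have "{x \<in> Y. code x k \<in> V} = (\<Union>b\<in>V. {x \<in> Y. code x k = b})" for V
    by auto
  ultimately show "continuous_map (top_of_set Y) (discrete_topology UNIV) (\<lambda>x. code x k)"
    unfolding continuous_map_def by (auto intro: openin_Union)
qed

lemma code_image: "code ` Y = UNIV"
proof -
  have "w \<in> code ` Y" for w
  proof -
    have "compact_space (top_of_set Y)"
      using compact by (simp add: compact_space_subtopology compactin_euclidean_iff)
    then have "(\<Inter>n. cell w n) \<noteq> {}"
      using compact_space_imp_nest closedin_member cell_member decseq_cell by metis
    then obtain x where x: "\<And>n. x \<in> cell w n" by blast
    then have "x \<in> Y" using x[of 0] by simp
    moreover have "code x = w" using code_eq_if_mem_cell x by blast
    ultimately show ?thesis by blast
  qed
  then show ?thesis by blast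
qed

lemma code_separates:
  assumes "x \<in> Y" "y \<in> Y" "U \<in> \<C>" "x \<in> U" "y \<notin> U"
  shows "code x \<noteq> code y"
proof
  assume eq: "code x = code y"
  obtain n where U: "from_nat_into \<C> n = U" using from_nat_into_surj[OF countable assms(3)] by blast
  let ?P = "cell (code x) n"
  have "x \<in> ?P" "y \<in> ?P" using mem_cell_code assms(1,2) eq by metis+
  then have "separator n ?P = U" using U assms(4,5) by (auto simp: separator_def)
  then have "separator n (cell_of x n) = U" "separator n (cell_of y n) = U"
    by (simp_all add: cell_of_code eq)
  then have "code x n" "\<not> code y n"
    using assms(4,5) by (simp_all add: code_def)
  then show False using eq by simp
qed

lemma code_eq_iff:
  assumes "x \<in> Y" "y \<in> Y"
  shows "code x = code y \<longleftrightarrow> (\<forall>U\<in>\<C>. x \<in> U \<longleftrightarrow> y \<in> U)"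
proof
  assume same: "\<forall>U\<in>\<C>. x \<in> U \<longleftrightarrow> y \<in> U"
  have "cell_of x n = cell_of y n \<and> code x n = code y n" for n
  proof (induction n)
    case 0
    have "separator 0 Y \<in> \<C>" using separator_member top_member nonempty by blast
    then show ?case using same by (simp add: code_def)
  next
    case (Suc n)
    then have "cell_of x (Suc n) = cell_of y (Suc n)"
      by (simp only: cell_of_Suc_code)
    moreover have "separator (Suc n) (cell_of y (Suc n)) \<in> \<C>"
      unfolding cell_of_code by (intro separator_member cell_member)
    ultimately show ?case using same by (simp add: code_def)
  qed
  then show "code x = code y" by auto
next
  assume "code x = code y"
  then show "\<forall>U\<in>\<C>. x \<in> U \<longleftrightarrow> y \<in> U" using code_separates assms by metis
qed

end

definition saturated :: "'a set set \<Rightarrow> 'a set \<Rightarrow> bool" where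
  "saturated \<F> U \<longleftrightarrow> (\<forall>A\<in>\<F>. A \<subseteq> U \<or> A \<inter> U = {})"

lemma regularizing_family_member_nonempty:
  assumes "regularizing_family X Y \<F>" "X \<noteq> {}" "A \<in> \<F>"
  shows "A \<noteq> {}"
proof
  assume "A = {}"
  moreover have "top_of_set A homeomorphic_space top_of_set X"
    using assms(1,3) by (simp add: regularizing_family_def)
  ultimately have "top_of_set X = trivial_topology"
    using homeomorphic_empty_space by fastforce
  then show False using assms(2) by (simp add: subtopology_trivial_iff)
qed

lemma regularizing_family_partition_on:
  assumes "regularizing_family X Y \<F>" "X \<noteq> {}"
  shows "partition_on Y (decomposition Y \<F>)"
proof (rule partition_onI)
  have F: "\<F> \<subseteq> Pow Y" "pairwise disjnt \<F>" using assms(1) by (simp_all add: regularizing_family_def)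
  show "\<Union>(decomposition Y \<F>) = Y" unfolding decomposition_def using F(1) by blast
  show "disjnt p q" if "p \<in> decomposition Y \<F>" "q \<in> decomposition Y \<F>" "p \<noteq> q" for p q
    using that F(2) by (auto simp: decomposition_def pairwise_def disjnt_def)
  show "{} \<notin> decomposition Y \<F>"
    using regularizing_family_member_nonempty[OF assms] by (auto simp: decomposition_def)
qed

text \<open>Only (a3) and (a4) are used here.\<close>
lemma regularizing_family_open_exists_other_block:
  assumes "regularizing_family X Y \<F>" "openin (top_of_set Y) U" "x \<in> U"
  shows "\<exists>y\<in>U. x \<noteq> y \<and> \<not> (\<exists>A\<in>\<F>. x \<in> A \<and> y \<in> A)"
proof -
  obtain W where W: "open W" "U = Y \<inter> W" using assms(2) by (auto simp: openin_open)
  have F: "\<F> \<subseteq> Pow Y" "pairwise disjnt \<F>" "\<And>A. A \<in> \<F> \<Longrightarrow> Y \<subseteq> closure (Y - A)"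
    "Y \<subseteq> closure (\<Union>\<F>)"
    using assms(1) by (simp_all add: regularizing_family_def)
  have "x \<in> Y" "x \<in> W" using assms(3) W(2) by auto
  show ?thesis
  proof (cases "\<exists>A\<in>\<F>. x \<in> A")
    case True
    then obtain A where A: "A \<in> \<F>" "x \<in> A" by blast
    have "W \<inter> (Y - A) \<noteq> {}"
      using open_Int_closure_eq_empty[OF W(1)] F(3)[OF A(1)] \<open>x \<in> Y\<close> \<open>x \<in> W\<close> by blast
    then obtain y where "y \<in> U" "y \<notin> A" using W(2) by blast
    moreover have "\<not> (y \<in> B \<and> x \<in> B)" if "B \<in> \<F>" for B
      using F(2) that A \<open>y \<notin> A\<close> by (auto simp: pairwise_def disjnt_def)
    ultimately show ?thesis using A(2) by (intro bexI[of _ y]) auto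
  next
    case False
    have "W \<inter> \<Union>\<F> \<noteq> {}"
      using open_Int_closure_eq_empty[OF W(1)] F(4) \<open>x \<in> Y\<close> \<open>x \<in> W\<close> by blast
    then obtain y B where "y \<in> W" "y \<in> B" "B \<in> \<F>" by blast
    moreover have "y \<in> Y" using F(1) \<open>y \<in> B\<close> \<open>B \<in> \<F>\<close> by blast
    ultimately show ?thesis using False W(2) by (intro bexI[of _ y]) auto
  qed
qed

lemma saturated_clopen_algebra:
  fixes Y :: "'a::metric_space set"
  assumes "compact Y" "regularizing_family X Y \<F>"
  shows "countable_atomless_clopen_algebra Y
    {U. openin (top_of_set Y) U \<and> closedin (top_of_set Y) U \<and> saturated \<F> U}"
proof
  have F: "\<F> \<subseteq> Pow Y" "infinite \<F>" using assms(2) by (simp_all add: regularizing_family_def)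
  show "compact Y" by (rule assms(1))
  show "Y \<noteq> {}"
  proof
    assume "Y = {}"
    then have "\<F> \<subseteq> {{}}" using F(1) by auto
    then show False using F(2) finite_subset by blast
  qed
  show "countable {U. openin (top_of_set Y) U \<and> closedin (top_of_set Y) U \<and> saturated \<F> U}"
    by (rule countable_subset[OF _ countable_clopenin_compact[OF assms(1)]]) blast
  show "Y \<in> {U. openin (top_of_set Y) U \<and> closedin (top_of_set Y) U \<and> saturated \<F> U}"
    using F(1) by (auto simp: saturated_def)
  show "U \<inter> V \<in> {U. openin (top_of_set Y) U \<and> closedin (top_of_set Y) U \<and> saturated \<F> U}"
    "U - V \<in> {U. openin (top_of_set Y) U \<and> closedin (top_of_set Y) U \<and> saturated \<F> U}"
    if "U \<in> {U. openin (top_of_set Y) U \<and> closedin (top_of_set Y) U \<and> saturated \<F> U}"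
       "V \<in> {U. openin (top_of_set Y) U \<and> closedin (top_of_set Y) U \<and> saturated \<F> U}" for U V
    using that by (auto simp: saturated_def intro: openin_Int closedin_Int openin_diff closedin_diff)
  show "openin (top_of_set Y) U"
    if "U \<in> {U. openin (top_of_set Y) U \<and> closedin (top_of_set Y) U \<and> saturated \<F> U}" for U
    using that by simp
  fix U assume U: "U \<in> {U. openin (top_of_set Y) U \<and> closedin (top_of_set Y) U \<and> saturated \<F> U}"
    and "U \<noteq> {}"
  then obtain x where "x \<in> U" by blast
  then obtain y where "y \<in> U" "x \<noteq> y" "\<not> (\<exists>A\<in>\<F>. x \<in> A \<and> y \<in> A)"
    using regularizing_family_open_exists_other_block[OF assms(2)] U by blast
  moreover have "x \<in> Y" "y \<in> Y" using U \<open>x \<in> U\<close> \<open>y \<in> U\<close> by (auto dest: openin_imp_subset)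
  ultimately obtain V where "openin (top_of_set Y) V" "closedin (top_of_set Y) V" "saturated \<F> V"
    "x \<in> V" "y \<notin> V"
    using assms(2) unfolding regularizing_family_def saturated_def by meson
  then show "\<exists>V\<in>{U. openin (top_of_set Y) U \<and> closedin (top_of_set Y) U \<and> saturated \<F> U}.
      U \<inter> V \<noteq> {} \<and> U - V \<noteq> {}"
    using \<open>x \<in> U\<close> \<open>y \<in> U\<close> by blast
qed

lemma saturated_clopen_separate_blocks:
  assumes "regularizing_family X Y \<F>" "x \<in> Y" "y \<in> Y"
  shows "(\<forall>U\<in>{U. openin (top_of_set Y) U \<and> closedin (top_of_set Y) U \<and> saturated \<F> U}. x \<in> U \<longleftrightarrow> y \<in> U)
    \<longleftrightarrow> (\<exists>d\<in>decomposition Y \<F>. x \<in> d \<and> y \<in> d)"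
proof
  assume "\<exists>d\<in>decomposition Y \<F>. x \<in> d \<and> y \<in> d"
  then have "x = y \<or> (\<exists>A\<in>\<F>. x \<in> A \<and> y \<in> A)" by (auto simp: decomposition_def)
  then show "\<forall>U\<in>{U. openin (top_of_set Y) U \<and> closedin (top_of_set Y) U \<and> saturated \<F> U}. x \<in> U \<longleftrightarrow> y \<in> U"
    by (auto simp: saturated_def)
next
  assume same: "\<forall>U\<in>{U. openin (top_of_set Y) U \<and> closedin (top_of_set Y) U \<and> saturated \<F> U}. x \<in> U \<longleftrightarrow> y \<in> U"
  have "x = y \<or> (\<exists>A\<in>\<F>. x \<in> A \<and> y \<in> A)"
  proof (rule ccontr)
    assume "\<not> (x = y \<or> (\<exists>A\<in>\<F>. x \<in> A \<and> y \<in> A))"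
    then obtain U where "openin (top_of_set Y) U" "closedin (top_of_set Y) U" "saturated \<F> U"
      "x \<in> U" "y \<notin> U"
      using assms unfolding regularizing_family_def saturated_def by meson
    then show False using same by blast
  qed
  then show "\<exists>d\<in>decomposition Y \<F>. x \<in> d \<and> y \<in> d"
    using assms(2) by (auto simp: decomposition_def)
qed

theorem lemma2:
  fixes X :: "'b::metric_space set" and Y :: "'a::metric_space set" and \<F> :: "'a set set"
  assumes "compact X" "X \<noteq> {}" "compact Y"
    and "regularizing_family X Y \<F>"
  shows "quotient_topology Y (decomposition Y \<F>) homeomorphic_space cantor_space"
proof -
  interpret countable_atomless_clopen_algebra Y
    "{U. openin (top_of_set Y) U \<and> closedin (top_of_set Y) U \<and> saturated \<F> U}"
    using assms(3,4) by (rule saturated_clopen_algebra)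
  show ?thesis
  proof (rule quotient_topology_homeomorphic_space[OF assms(3)
        regularizing_family_partition_on[OF assms(4,2)] continuous_map_code])
    show "Hausdorff_space cantor_space"
      by (simp add: cantor_space_def Hausdorff_space_product_topology)
    show "code ` Y = topspace cantor_space"
      by (simp add: code_image cantor_space_def)
    show "code x = code y \<longleftrightarrow> (\<exists>d\<in>decomposition Y \<F>. x \<in> d \<and> y \<in> d)" if "x \<in> Y" "y \<in> Y" for x y
      using code_eq_iff[OF that] saturated_clopen_separate_blocks[OF assms(4) that] by simp
  qed
qed

end
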